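(* Let $(V,c)$ be a network satisfying the Yang-type inequality with constant $C_{YT}$. Let $\Omega\subset V$ be finite with Dirichlet eigenvalues $\lambda_1\le\cdots\le\lambda_{|\Omega|}$. If $\lambda_k\le1+C_{YT}$ for some $1\le k<|\Omega|$, then $$\sum_{i=1}^k\frac{\lambda_i-\lambda_{\min}}{\lambda_{k+1}-\lambda_i}\ge\frac1{C_{YT}}\sum_{i=1}^k(1-\lambda_i).$$
   Context: A network is a pair $(V,c)$ with $V$ countable and $c:V\times V\to[0,\infty)$ symmetric with $\pi(x)=\sum_yc(x,y)<\infty$; $P(x,y)=c(x,y)/\pi(x)$ and $\Delta f(x)=\sum_yP(x,y)(f(x)-f(y))$, a bounded self-adjoint operator on $L^2(V,\pi)$ (inner product $\sum_x\pi(x)f(x)\overline{g(x)}$) with spectrum in $[0,2]$; $\lambda_{\min}$ is the bottom of its spectrum. For finite $\Omega\subset V$, the Dirichlet eigenvalues $\lambda_1\le\cdots\le\lambda_{|\Omega|}$ of $\Omega$ are the eigenvalues (with multiplicity) of the compression $\Delta_\Omega f=\mathbf 1_\Omega\cdot\Delta f$ on functions vanishing outside $\Omega$. The network satisfies the Yang-type inequality with constant $C_{YT}$ if for every finite $\Omega\subset V$ and every $k<|\Omega|$: $\sum_{i=1}^k(\lambda_{k+1}-\lambda_i)^2(1-\lambda_i)\le C_{YT}\sum_{i=1}^k(\lambda_{k+1}-\lambda_i)(\lambda_i-\lambda_{\min})$. *)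

theory Defs
  imports "HOL-Analysis.Analysis" "HOL-Library.Countable" "Jordan_Normal_Form.Char_Poly"
begin

definition pi_w :: "('v \<Rightarrow> 'v \<Rightarrow> real) \<Rightarrow> 'v \<Rightarrow> real" where
  "pi_w c x = (\<Sum>\<^sub>\<infinity>y. c x y)"

definition network :: "('v::countable \<Rightarrow> 'v \<Rightarrow> real) \<Rightarrow> bool" where
  "network c \<longleftrightarrow> (\<forall>x y. c x y = c y x) \<and> (\<forall>x y. 0 \<le> c x y)
     \<and> (\<forall>x. (c x) summable_on UNIV) \<and> (\<forall>x. 0 < pi_w c x)"

definition trans_P :: "('v \<Rightarrow> 'v \<Rightarrow> real) \<Rightarrow> 'v \<Rightarrow> 'v \<Rightarrow> real" where
  "trans_P c x y = c x y / pi_w c x"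

definition lap :: "('v \<Rightarrow> 'v \<Rightarrow> real) \<Rightarrow> ('v \<Rightarrow> 'b::banach) \<Rightarrow> 'v \<Rightarrow> 'b" where
  "lap c f x = (\<Sum>\<^sub>\<infinity>y. trans_P c x y *\<^sub>R (f x - f y))"

definition l2 :: "('v \<Rightarrow> 'v \<Rightarrow> real) \<Rightarrow> ('v \<Rightarrow> complex) set" where
  "l2 c = {f. (\<lambda>x. pi_w c x * (cmod (f x))\<^sup>2) summable_on UNIV}"

text \<open>Spectrum of Delta on L^2(V,pi): z such that Delta - z I is not a bijection of L^2
  (for the bounded operator Delta this is equivalent to not having a bounded inverse).\<close>
definition lap_spectrum :: "('v \<Rightarrow> 'v \<Rightarrow> real) \<Rightarrow> complex set" where
  "lap_spectrum c = {z. \<not> bij_betw (\<lambda>f x. lap c f x - z * f x) (l2 c) (l2 c)}"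

definition lambda_min :: "('v \<Rightarrow> 'v \<Rightarrow> real) \<Rightarrow> real" where
  "lambda_min c = Inf {t::real. complex_of_real t \<in> lap_spectrum c}"

text \<open>Matrix of the compression Delta_Omega w.r.t. the basis of indicator functions of the
  points of Omega, enumerated by e.\<close>
definition dir_mat :: "('v \<Rightarrow> 'v \<Rightarrow> real) \<Rightarrow> 'v set \<Rightarrow> (nat \<Rightarrow> 'v) \<Rightarrow> real mat" where
  "dir_mat c \<Omega> e = mat (card \<Omega>) (card \<Omega>)
     (\<lambda>(i,j). lap c (\<lambda>y. if y = e j then (1::real) else 0) (e i))"

definition dirichlet_eigs :: "('v \<Rightarrow> 'v \<Rightarrow> real) \<Rightarrow> 'v set \<Rightarrow> (nat \<Rightarrow> real) \<Rightarrow> bool" where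
  "dirichlet_eigs c \<Omega> lam \<longleftrightarrow>
     (\<forall>i j. 1 \<le> i \<longrightarrow> i \<le> j \<longrightarrow> j \<le> card \<Omega> \<longrightarrow> lam i \<le> lam j) \<and>
     (\<exists>e. bij_betw e {..<card \<Omega>} \<Omega> \<and>
          char_poly (dir_mat c \<Omega> e) = (\<Prod>i=1..card \<Omega>. [:- lam i, 1:]))"

definition yang_type :: "('v::countable \<Rightarrow> 'v \<Rightarrow> real) \<Rightarrow> real \<Rightarrow> bool" where
  "yang_type c C \<longleftrightarrow> (\<forall>\<Omega> lam k. finite \<Omega> \<longrightarrow> dirichlet_eigs c \<Omega> lam \<longrightarrow> k < card \<Omega> \<longrightarrow>
      (\<Sum>i=1..k. (lam (k+1) - lam i)\<^sup>2 * (1 - lam i))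
        \<le> C * (\<Sum>i=1..k. (lam (k+1) - lam i) * (lam i - lambda_min c)))"

end

theory Submission
  imports Defs
begin

text \<open>Put \<open>u i = \<lambda>(k+1) - \<lambda> i > 0\<close> and \<open>w i = 1 + C - \<lambda> i \<ge> 0\<close>. Adding \<open>C \<Sum> (u i)\<^sup>2\<close> to
  both sides of the Yang-type inequality turns it into \<open>\<Sum> (u i)\<^sup>2 w i \<le> C (\<lambda>(k+1) - \<lambda>\<^sub>m\<^sub>i\<^sub>n) \<Sum> u i\<close>.
  Since \<open>u\<close> and \<open>w\<close> differ by a constant, the sequences \<open>(u i)\<^sup>2\<close> and \<open>u i w i\<close> are similarly
  ordered, and Chebyshev's sum inequality with weights \<open>1 / u i\<close> gives
  \<open>(\<Sum> u i)(\<Sum> w i) \<le> (\<Sum> (u i)\<^sup>2 w i)(\<Sum> 1 / u i)\<close>. Together,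
  \<open>\<Sum> w i \<le> C (\<lambda>(k+1) - \<lambda>\<^sub>m\<^sub>i\<^sub>n) \<Sum> 1 / u i\<close>, which is the claim rewritten termwise.\<close>

lemma weighted_Chebyshev_sum:
  fixes p a b :: "'i \<Rightarrow> 'a::linordered_idom"
  assumes "\<And>i. i \<in> I \<Longrightarrow> 0 \<le> p i"
    and "\<And>i j. i \<in> I \<Longrightarrow> j \<in> I \<Longrightarrow> 0 \<le> (a i - a j) * (b i - b j)"
  shows "(\<Sum>i\<in>I. p i * a i) * (\<Sum>i\<in>I. p i * b i) \<le> (\<Sum>i\<in>I. p i) * (\<Sum>i\<in>I. p i * a i * b i)"
proof -
  let ?P = "\<Sum>i\<in>I. p i" and ?A = "\<Sum>i\<in>I. p i * a i"
    and ?B = "\<Sum>i\<in>I. p i * b i" and ?AB = "\<Sum>i\<in>I. p i * a i * b i"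
  let ?S = "\<Sum>i\<in>I. \<Sum>j\<in>I. p i * p j * ((a i - a j) * (b i - b j))"
  have "?S = (\<Sum>i\<in>I. \<Sum>j\<in>I. (p i * a i * b i) * p j + p i * (p j * a j * b j)
                 - (p i * a i) * (p j * b j) - (p i * b i) * (p j * a j))"
    by (intro sum.cong refl) (simp add: algebra_simps)
  also have "\<dots> = ?AB * ?P + ?P * ?AB - ?A * ?B - ?B * ?A"
    by (simp add: sum_subtractf sum.distrib sum_product)
  finally have "?S = 2 * (?P * ?AB - ?A * ?B)"
    by (simp add: algebra_simps)
  moreover have "0 \<le> ?S"
    by (intro sum_nonneg) (metis assms mult_nonneg_nonneg)
  ultimately show ?thesis by simp
qed

lemma sum_mult_sum_le_sum_square_mult_sum_inverse:
  fixes u w :: "'i \<Rightarrow> 'a::linordered_field"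
  assumes u_pos: "\<And>i. i \<in> I \<Longrightarrow> 0 < u i" and w_nonneg: "\<And>i. i \<in> I \<Longrightarrow> 0 \<le> w i"
    and comonotone: "\<And>i j. i \<in> I \<Longrightarrow> j \<in> I \<Longrightarrow> u i \<le> u j \<Longrightarrow> w i \<le> w j"
  shows "(\<Sum>i\<in>I. u i) * (\<Sum>i\<in>I. w i) \<le> (\<Sum>i\<in>I. (u i)\<^sup>2 * w i) * (\<Sum>i\<in>I. 1 / u i)"
proof -
  have similarly_ordered: "0 \<le> ((u i)\<^sup>2 - (u j)\<^sup>2) * (u i * w i - u j * w j)"
    if "i \<in> I" "j \<in> I" for i j
  proof (cases "u i \<le> u j")
    case True
    have "(u i)\<^sup>2 \<le> (u j)\<^sup>2" "u i * w i \<le> u j * w j"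
      using True that u_pos w_nonneg comonotone
      by (auto intro!: power_mono mult_mono simp: less_imp_le)
    then show ?thesis by (simp add: mult_nonpos_nonpos)
  next
    case False
    have "(u j)\<^sup>2 \<le> (u i)\<^sup>2" "u j * w j \<le> u i * w i"
      using False that u_pos w_nonneg comonotone
      by (auto intro!: power_mono mult_mono simp: less_imp_le)
    then show ?thesis by simp
  qed
  have "(\<Sum>i\<in>I. 1 / u i * (u i)\<^sup>2) * (\<Sum>i\<in>I. 1 / u i * (u i * w i))
      \<le> (\<Sum>i\<in>I. 1 / u i) * (\<Sum>i\<in>I. 1 / u i * (u i)\<^sup>2 * (u i * w i))"
    using u_pos similarly_ordered by (intro weighted_Chebyshev_sum) (auto simp: less_imp_le)
  moreover have "(\<Sum>i\<in>I. 1 / u i * (u i)\<^sup>2) = (\<Sum>i\<in>I. u i)"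
    "(\<Sum>i\<in>I. 1 / u i * (u i * w i)) = (\<Sum>i\<in>I. w i)"
    "(\<Sum>i\<in>I. 1 / u i * (u i)\<^sup>2 * (u i * w i)) = (\<Sum>i\<in>I. (u i)\<^sup>2 * w i)"
    using u_pos by (auto intro!: sum.cong simp: power2_eq_square dual_order.strict_implies_not_eq)
  ultimately show ?thesis
    by (simp only: mult.commute)
qed

lemma quotient_sum_bound_of_Yang_inequality:
  fixes lam :: "'i \<Rightarrow> real"
  assumes "0 < C"
    and below_L: "\<And>i. i \<in> I \<Longrightarrow> lam i < L"
    and below_1_plus_C: "\<And>i. i \<in> I \<Longrightarrow> lam i \<le> 1 + C"
    and Yang: "(\<Sum>i\<in>I. (L - lam i)\<^sup>2 * (1 - lam i)) \<le> C * (\<Sum>i\<in>I. (L - lam i) * (lam i - m))"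
  shows "(\<Sum>i\<in>I. (lam i - m) / (L - lam i)) \<ge> (1 / C) * (\<Sum>i\<in>I. 1 - lam i)"
proof (cases "finite I \<and> I \<noteq> {}")
  case False
  then show ?thesis by auto
next
  case True
  define u where "u i = L - lam i" for i
  define w where "w i = 1 + C - lam i" for i
  define B where "B = L - m"
  have u_pos: "\<And>i. i \<in> I \<Longrightarrow> 0 < u i" and w_nonneg: "\<And>i. i \<in> I \<Longrightarrow> 0 \<le> w i"
    using below_L below_1_plus_C by (simp_all add: u_def w_def)
  have "(\<Sum>i\<in>I. (u i)\<^sup>2 * w i) - C * B * (\<Sum>i\<in>I. u i)
      = (\<Sum>i\<in>I. (L - lam i)\<^sup>2 * (1 - lam i)) - C * (\<Sum>i\<in>I. (L - lam i) * (lam i - m))"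
    unfolding sum_distrib_left sum_subtractf[symmetric]
    by (intro sum.cong refl) (simp add: u_def w_def B_def power2_eq_square algebra_simps)
  with Yang have weighted_Yang: "(\<Sum>i\<in>I. (u i)\<^sup>2 * w i) \<le> C * B * (\<Sum>i\<in>I. u i)"
    by linarith
  have "(\<Sum>i\<in>I. u i) * (\<Sum>i\<in>I. w i) \<le> (\<Sum>i\<in>I. (u i)\<^sup>2 * w i) * (\<Sum>i\<in>I. 1 / u i)"
    using u_pos w_nonneg
    by (intro sum_mult_sum_le_sum_square_mult_sum_inverse) (auto simp: u_def w_def)
  also have "\<dots> \<le> C * B * (\<Sum>i\<in>I. u i) * (\<Sum>i\<in>I. 1 / u i)"
    using weighted_Yang u_pos by (intro mult_right_mono sum_nonneg) (auto intro: less_imp_le)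
  finally have "(\<Sum>i\<in>I. w i) \<le> C * B * (\<Sum>i\<in>I. 1 / u i)"
    using sum_pos[of I u] True u_pos by (simp add: mult.commute mult.left_commute)
  then have "(\<Sum>i\<in>I. w i) / C \<le> B * (\<Sum>i\<in>I. 1 / u i)"
    using \<open>0 < C\<close> by (simp add: divide_le_eq mult.commute mult.left_commute)
  then have "0 \<le> (\<Sum>i\<in>I. B / u i - w i / C)"
    by (simp add: sum_subtractf sum_distrib_left sum_divide_distrib[symmetric])
  also have "\<dots> = (\<Sum>i\<in>I. (lam i - m) / (L - lam i)) - (1 / C) * (\<Sum>i\<in>I. 1 - lam i)"
    unfolding sum_distrib_left sum_subtractf[symmetric]
  proof (intro sum.cong refl)
    fix i assume "i \<in> I"
    then have "L - lam i \<noteq> 0" using below_L by fastforce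
    with \<open>0 < C\<close> show "B / u i - w i / C = (lam i - m) / (L - lam i) - 1 / C * (1 - lam i)"
      by (simp add: u_def w_def B_def field_simps)
  qed
  finally show ?thesis by simp
qed

theorem corollary5p3:
  fixes c :: "'v::countable \<Rightarrow> 'v \<Rightarrow> real" and C :: real
    and \<Omega> :: "'v set" and lam :: "nat \<Rightarrow> real" and k :: nat
  assumes "network c"
    and "yang_type c C"
    and "0 < C"
    and "finite \<Omega>"
    and "dirichlet_eigs c \<Omega> lam"
    and "1 \<le> k" and "k < card \<Omega>"
    and "lam k \<le> 1 + C"
    and "lam k < lam (k+1)"
  shows "(\<Sum>i=1..k. (lam i - lambda_min c) / (lam (k+1) - lam i))
           \<ge> (1 / C) * (\<Sum>i=1..k. (1 - lam i))"
proof (rule quotient_sum_bound_of_Yang_inequality)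
  have "lam i \<le> lam k" if "i \<in> {1..k}" for i
    using assms(5,7) that unfolding dirichlet_eigs_def by auto
  with assms(8,9) show "\<And>i. i \<in> {1..k} \<Longrightarrow> lam i < lam (k+1)"
    and "\<And>i. i \<in> {1..k} \<Longrightarrow> lam i \<le> 1 + C"
    by fastforce+
  show "(\<Sum>i=1..k. (lam (k+1) - lam i)\<^sup>2 * (1 - lam i))
      \<le> C * (\<Sum>i=1..k. (lam (k+1) - lam i) * (lam i - lambda_min c))"
    using assms(2,4,5,7) unfolding yang_type_def by blast
qed (rule assms(3))

end
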